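(* There exist absolute constants $c>0$ and $n_0$ such that for every $n\ge n_0$ and every $p$ with $1-\frac{1}{10n}\le p\le 1$, if $G\sim G(n,p)$ then $$\mathbb{P}(G\text{ is even-decomposable})\le e^{-cn}.$$
   Context: $G(n,p)$ is the binomial random graph on $n$ labelled vertices in which each pair is an edge independently with probability $p$. A graph $H$ is even-decomposable if there is a sequence $V(H)=V_0\supset V_1\supset\cdots\supset V_k=\emptyset$ such that for each $0\le i\le k-1$, the induced subgraph $H[V_i]$ has an even number of edges and $V_i\setminus V_{i+1}$ is an independent set in $H$. *)

theory Defs
  imports Complex_Main
begin

text \<open>Simple graphs on the vertex set {0..<n}: an edge is a 2-element set {i,j}.
  A graph is a set of such edges.\<close>

definition all_edges :: "nat \<Rightarrow> nat set set" where
  "all_edges n = {e. \<exists>i j. i < j \<and> j < n \<and> e = {i, j}}"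

definition induced_edges :: "nat set set \<Rightarrow> nat set \<Rightarrow> nat set set" where
  "induced_edges E S = {e \<in> E. e \<subseteq> S}"

definition independent_set :: "nat set set \<Rightarrow> nat set \<Rightarrow> bool" where
  "independent_set E S \<longleftrightarrow> (\<forall>e\<in>E. \<not> e \<subseteq> S)"

definition even_decomposable :: "nat set \<Rightarrow> nat set set \<Rightarrow> bool" where
  "even_decomposable V E \<longleftrightarrow>
     (\<exists>(k::nat) (Vs :: nat \<Rightarrow> nat set). Vs 0 = V \<and> Vs k = {} \<and>
        (\<forall>i<k. Vs (Suc i) \<subset> Vs i \<and>
               even (card (induced_edges E (Vs i))) \<and>
               independent_set E (Vs i - Vs (Suc i))))"

text \<open>Probability that G(n,p) (on vertex set {0..<n}) has property P:
  each of the n choose 2 pairs is an edge independently with probability p.\<close>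
definition gnp_prob :: "nat \<Rightarrow> real \<Rightarrow> (nat set set \<Rightarrow> bool) \<Rightarrow> real" where
  "gnp_prob n p P =
     (\<Sum>E\<in>Pow (all_edges n). if P E
        then p ^ card E * (1 - p) ^ (card (all_edges n) - card E) else 0)"

end

theory Submission
  imports Defs
begin

text \<open>A universal vertex (one adjacent to all others) lies in no independent set of size two,
  so an even decomposition removes the universal vertices one per step. Deleting a universal
  vertex from a set of s vertices deletes s - 1 induced edges, so two consecutive such steps
  cannot both preserve an even edge count. Hence there are at most one more universal than
  non-universal vertices, and an even-decomposable graph on n vertices misses at least
  (n - 1)/4 edges. For p \<ge> 1 - 1/(10n) the expectation of e to the number of non-edges is at
  most e^(n/5), and Markov's inequality bounds the probability by e^(1/4 - n/20).\<close>

definition universal_vertices :: "nat set \<Rightarrow> nat set set \<Rightarrow> nat set" where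
  "universal_vertices V E = {u \<in> V. \<forall>v\<in>V - {u}. {u, v} \<in> E}"

definition even_chain :: "nat set set \<Rightarrow> (nat \<Rightarrow> nat set) \<Rightarrow> nat \<Rightarrow> bool" where
  "even_chain E Vs k \<longleftrightarrow> Vs k = {} \<and>
     (\<forall>i<k. Vs (Suc i) \<subset> Vs i \<and> even (card (induced_edges E (Vs i))) \<and>
            independent_set E (Vs i - Vs (Suc i)))"

lemma even_decomposable_iff_even_chain:
  "even_decomposable V E \<longleftrightarrow> (\<exists>k Vs. Vs 0 = V \<and> even_chain E Vs k)"
  unfolding even_decomposable_def even_chain_def by blast

lemma even_chain_0: "even_chain E Vs 0 \<longleftrightarrow> Vs 0 = {}"
  by (simp add: even_chain_def)

lemma even_chain_Suc:
  "even_chain E Vs (Suc k) \<longleftrightarrow>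
     Vs 1 \<subset> Vs 0 \<and> even (card (induced_edges E (Vs 0))) \<and> independent_set E (Vs 0 - Vs 1) \<and>
     even_chain E (\<lambda>i. Vs (Suc i)) k"
  unfolding even_chain_def by (auto simp: less_Suc_eq_0_disj)

lemma even_chain_even_card:
  assumes "\<forall>e\<in>E. card e = 2" "even_chain E Vs k"
  shows "even (card (induced_edges E (Vs 0)))"
proof (cases k)
  case 0
  then have "induced_edges E (Vs 0) = {}"
    using assms by (auto simp: even_chain_0 induced_edges_def)
  then show ?thesis by simp
qed (use assms in \<open>simp add: even_chain_Suc\<close>)

lemma independent_step_cases:
  assumes "S \<subseteq> V" "T \<subset> S" "independent_set E (S - T)"
  obtains (universal) u where "u \<in> universal_vertices V E" "S = insert u T" "u \<notin> T"
    | (nonuniversal) "S \<inter> universal_vertices V E = T \<inter> universal_vertices V E"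
        "T - universal_vertices V E \<subset> S - universal_vertices V E"
proof (cases "(S - T) \<inter> universal_vertices V E = {}")
  case True
  then have "S \<inter> universal_vertices V E = T \<inter> universal_vertices V E"
    using assms(2) by blast
  moreover have "T - universal_vertices V E \<subset> S - universal_vertices V E"
    using True assms(2) by blast
  ultimately show ?thesis by (rule nonuniversal)
next
  case False
  then obtain u where u: "u \<in> S - T" "u \<in> universal_vertices V E" by blast
  have "S - T \<subseteq> {u}"
  proof (rule ccontr)
    assume "\<not> S - T \<subseteq> {u}"
    then obtain v where v: "v \<in> S - T" "v \<noteq> u" by blast
    then have "{u, v} \<in> E" using u assms(1) unfolding universal_vertices_def by auto
    moreover have "{u, v} \<subseteq> S - T" using u v by blast
    ultimately show False using assms(3) unfolding independent_set_def by blast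
  qed
  then have "S = insert u T" using u assms(2) by blast
  with u show ?thesis by (intro universal) auto
qed

lemma card_induced_edges_remove_universal:
  assumes edges: "\<forall>e\<in>E. card e = 2" and S: "finite S" "u \<in> S"
    and adj: "\<forall>v\<in>S - {u}. {u, v} \<in> E"
  shows "card (induced_edges E S) = card (induced_edges E (S - {u})) + (card S - 1)"
proof -
  have split: "induced_edges E S = induced_edges E (S - {u}) \<union> (\<lambda>v. {u, v}) ` (S - {u})"
  proof (intro equalityI subsetI)
    fix e assume e: "e \<in> induced_edges E S"
    then obtain x y where "e = {x, y}" "x \<noteq> y"
      using edges unfolding induced_edges_def by (auto simp: card_2_iff)
    then show "e \<in> induced_edges E (S - {u}) \<union> (\<lambda>v. {u, v}) ` (S - {u})"
      using e unfolding induced_edges_def by (cases "u \<in> e") (auto simp: insert_commute)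
  qed (use adj S in \<open>auto simp: induced_edges_def\<close>)
  have "finite (induced_edges E (S - {u}))"
    using S by (auto simp: induced_edges_def intro: finite_subset[of _ "Pow S"])
  moreover have "inj_on (\<lambda>v. {u, v}) (S - {u})"
    by (auto simp: inj_on_def doubleton_eq_iff)
  ultimately show ?thesis
    unfolding split using S
    by (subst card_Un_disjoint) (auto simp: induced_edges_def card_image)
qed

lemma even_edges_remove_two_universal:
  assumes edges: "\<forall>e\<in>E. card e = 2" and "finite S" "S \<subseteq> V"
    and "u \<in> S" "w \<in> S" "u \<noteq> w" "u \<in> universal_vertices V E" "w \<in> universal_vertices V E"
    and even: "even (card (induced_edges E S))" "even (card (induced_edges E (S - {u})))"
  shows "odd (card (induced_edges E (S - {u} - {w})))"
proof -
  have "card (induced_edges E S) = card (induced_edges E (S - {u})) + (card S - 1)"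
    using assms by (intro card_induced_edges_remove_universal) (auto simp: universal_vertices_def)
  moreover have "card (induced_edges E (S - {u}))
      = card (induced_edges E (S - {u} - {w})) + (card (S - {u}) - 1)"
    using assms by (intro card_induced_edges_remove_universal) (auto simp: universal_vertices_def)
  moreover have "card (S - {u}) = card S - 1" "2 \<le> card S"
    using assms card_mono[of S "{u, w}"] by auto
  ultimately show ?thesis using even by (auto simp: even_diff_nat)
qed

text \<open>A universal step can only be followed by a non-universal one, so the induction looks
  up to two steps ahead.\<close>

lemma even_chain_card_universal_le:
  assumes edges: "\<forall>e\<in>E. card e = 2" and V: "finite V"
    and "even_chain E Vs k" "Vs 0 \<subseteq> V"
  shows "card (Vs 0 \<inter> universal_vertices V E) \<le> card (Vs 0 - universal_vertices V E) + 1"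
  using assms(3,4)
proof (induction k arbitrary: Vs rule: less_induct)
  case (less k)
  let ?U = "universal_vertices V E"
  have fin: "finite (Vs i)" if "Vs i \<subseteq> V" for i
    using V that by (rule finite_subset[rotated])
  show ?case
  proof (cases k)
    case 0
    then show ?thesis using less.prems by (simp add: even_chain_0)
  next
    case (Suc k1)
    then have step0: "Vs 1 \<subset> Vs 0" "even (card (induced_edges E (Vs 0)))"
        "independent_set E (Vs 0 - Vs 1)"
      and chain1: "even_chain E (\<lambda>i. Vs (Suc i)) k1"
      using less.prems by (simp_all add: even_chain_Suc)
    have V1: "Vs 1 \<subseteq> V" using step0 less.prems by auto
    from less.prems(2) step0(1,3) show ?thesis
    proof (cases rule: independent_step_cases)
      case nonuniversal
      have "card (Vs 1 - ?U) < card (Vs 0 - ?U)"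
        using nonuniversal(2) fin[OF less.prems(2)] by (intro psubset_card_mono) auto
      moreover have "card (Vs 1 \<inter> ?U) \<le> card (Vs 1 - ?U) + 1"
        using less.IH[of k1 "\<lambda>i. Vs (Suc i)"] Suc chain1 V1 by simp
      ultimately show ?thesis using nonuniversal(1) by simp
    next
      case (universal u)
      have card0: "card (Vs 0 \<inter> ?U) = card (Vs 1 \<inter> ?U) + 1" "Vs 0 - ?U = Vs 1 - ?U"
        using universal fin[OF V1] by auto
      show ?thesis
      proof (cases k1)
        case 0
        then show ?thesis using chain1 card0 by (simp add: even_chain_0)
      next
        case (Suc k2)
        then have step1: "Vs 2 \<subset> Vs 1" "even (card (induced_edges E (Vs 1)))"
            "independent_set E (Vs 1 - Vs 2)"
          and chain2: "even_chain E (\<lambda>i. Vs (Suc (Suc i))) k2"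
          using chain1 by (simp_all add: even_chain_Suc numeral_2_eq_2)
        have even2: "even (card (induced_edges E (Vs 2)))"
          using even_chain_even_card[OF edges chain2] by (simp add: numeral_2_eq_2)
        from V1 step1(1,3) show ?thesis
        proof (cases rule: independent_step_cases)
          case (universal w)
          have "odd (card (induced_edges E (Vs 0 - {u} - {w})))"
            using universal \<open>u \<in> ?U\<close> \<open>Vs 0 = insert u (Vs 1)\<close> \<open>u \<notin> Vs 1\<close> step0(2) step1(2)
              less.prems(2) fin[OF less.prems(2)]
            by (intro even_edges_remove_two_universal[OF edges]) auto
          moreover have "Vs 0 - {u} - {w} = Vs 2"
            using universal \<open>Vs 0 = insert u (Vs 1)\<close> \<open>u \<notin> Vs 1\<close> by auto
          ultimately show ?thesis using even2 by simp
        next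
          case nonuniversal
          have "card (Vs 2 - ?U) < card (Vs 1 - ?U)"
            using nonuniversal(2) fin[OF V1] by (intro psubset_card_mono) auto
          moreover have "card (Vs 2 \<inter> ?U) \<le> card (Vs 2 - ?U) + 1"
            using less.IH[of k2 "\<lambda>i. Vs (Suc (Suc i))"] \<open>k = Suc k1\<close> Suc chain2 V1 step1(1)
            by (simp add: numeral_2_eq_2)
          ultimately show ?thesis using nonuniversal(1) card0 by simp
        qed
      qed
    qed
  qed
qed

lemma finite_all_edges: "finite (all_edges n)"
  by (rule finite_subset[of _ "Pow {0..<n}"]) (auto simp: all_edges_def)

lemma card_all_edges_le: "card (all_edges n) \<le> n * n"
proof -
  have "all_edges n \<subseteq> (\<lambda>(i, j). {i, j}) ` ({0..<n} \<times> {0..<n})"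
    unfolding all_edges_def by force
  then have "card (all_edges n) \<le> card ((\<lambda>(i, j). {i, j}) ` ({0..<n} \<times> {0..<n}))"
    by (intro card_mono) auto
  also have "\<dots> \<le> card ({0..<n} \<times> {0..<n})"
    by (rule card_image_le) simp
  finally show ?thesis by simp
qed

lemma doubleton_in_all_edges:
  assumes "i < n" "j < n" "i \<noteq> j"
  shows "{i, j} \<in> all_edges n"
proof (cases "i < j")
  case True
  then show ?thesis using assms unfolding all_edges_def by blast
next
  case False
  then have "j < i" "{i, j} = {j, i}" using assms(3) by auto
  then show ?thesis using assms unfolding all_edges_def by blast
qed

lemma card_edge_all_edges: "e \<in> all_edges n \<Longrightarrow> card e = 2"
  by (auto simp: all_edges_def)

lemma card_nonuniversal_le_non_edges:
  "card ({0..<n} - universal_vertices {0..<n} E) \<le> 2 * card (all_edges n - E)"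
proof -
  have "{0..<n} - universal_vertices {0..<n} E \<subseteq> \<Union> (all_edges n - E)"
  proof
    fix w assume w: "w \<in> {0..<n} - universal_vertices {0..<n} E"
    then obtain v where v: "v \<in> {0..<n} - {w}" "{w, v} \<notin> E"
      unfolding universal_vertices_def by blast
    have "{w, v} \<in> all_edges n"
      using w v(1) by (auto intro: doubleton_in_all_edges)
    with v show "w \<in> \<Union> (all_edges n - E)" by blast
  qed
  then have "card ({0..<n} - universal_vertices {0..<n} E) \<le> card (\<Union> (all_edges n - E))"
    using finite_all_edges by (intro card_mono) (auto simp: all_edges_def)
  also have "\<dots> \<le> (\<Sum>e\<in>all_edges n - E. card e)"
    by (rule card_Union_le_sum_card)
  also have "\<dots> = (\<Sum>e\<in>all_edges n - E. 2)"
    by (rule sum.cong) (auto simp: card_edge_all_edges)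
  finally show ?thesis by simp
qed

lemma even_decomposable_imp_many_non_edges:
  assumes E: "E \<subseteq> all_edges n" and "even_decomposable {0..<n} E"
  shows "n \<le> 4 * card (all_edges n - E) + 1"
proof -
  let ?U = "universal_vertices {0..<n} E"
  obtain k Vs where Vs: "Vs 0 = {0..<n}" "even_chain E Vs k"
    using assms(2) by (auto simp: even_decomposable_iff_even_chain)
  have "\<forall>e\<in>E. card e = 2" using E card_edge_all_edges by blast
  from even_chain_card_universal_le[OF this _ Vs(2)]
  have "card ({0..<n} \<inter> ?U) \<le> card ({0..<n} - ?U) + 1"
    unfolding Vs(1) by simp
  moreover have "card ({0..<n} \<inter> ?U) + card ({0..<n} - ?U) = n"
    by (subst card_Int_Diff[symmetric]) simp_all
  ultimately show ?thesis using card_nonuniversal_le_non_edges[of n E] by linarith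
qed

lemma sum_Pow_power_card:
  fixes x y :: "'a :: comm_semiring_1"
  assumes "finite A"
  shows "(\<Sum>X\<in>Pow A. x ^ card X * y ^ card (A - X)) = (x + y) ^ card A"
  using prod_add[OF assms, of "\<lambda>_. x" "\<lambda>_. y"] by simp

lemma binomial_tail_exp_bound:
  fixes p m :: real
  assumes A: "finite A" and p: "0 \<le> p" "p \<le> 1"
    and far: "\<And>X. X \<subseteq> A \<Longrightarrow> P X \<Longrightarrow> m \<le> card (A - X)"
  shows "(\<Sum>X\<in>Pow A. if P X then p ^ card X * (1 - p) ^ (card A - card X) else 0)
           \<le> exp (- m) * (p + exp 1 * (1 - p)) ^ card A"
proof -
  have "(if P X then p ^ card X * (1 - p) ^ (card A - card X) else 0)
          \<le> exp (- m) * (p ^ card X * (exp 1 * (1 - p)) ^ card (A - X))" if X: "X \<subseteq> A" for X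
  proof (cases "P X")
    case True
    have "1 \<le> exp (real (card (A - X)) - m)" using far[OF X True] by simp
    also have "\<dots> = exp (- m) * exp 1 ^ card (A - X)"
      by (simp add: exp_diff exp_minus exp_of_nat_mult[symmetric] field_simps)
    moreover have "0 \<le> p ^ card X * (1 - p) ^ card (A - X)" using p by simp
    ultimately have "p ^ card X * (1 - p) ^ card (A - X)
        \<le> exp (- m) * exp 1 ^ card (A - X) * (p ^ card X * (1 - p) ^ card (A - X))"
      by (simp add: mult_le_cancel_right1)
    then show ?thesis
      using True X A by (simp add: card_Diff_subset finite_subset power_mult_distrib mult_ac)
  qed (use p in simp)
  then have "(\<Sum>X\<in>Pow A. if P X then p ^ card X * (1 - p) ^ (card A - card X) else 0)
      \<le> (\<Sum>X\<in>Pow A. exp (- m) * (p ^ card X * (exp 1 * (1 - p)) ^ card (A - X)))"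
    by (intro sum_mono) auto
  also have "\<dots> = exp (- m) * (p + exp 1 * (1 - p)) ^ card A"
    by (simp add: sum_distrib_left[symmetric] sum_Pow_power_card A)
  finally show ?thesis .
qed

lemma gnp_prob_even_decomposable_le:
  assumes n: "0 < n" and p: "1 - 1 / (10 * real n) \<le> p" "p \<le> 1"
  shows "gnp_prob n p (even_decomposable {0..<n}) \<le> exp (1 / 4 - real n / 20)"
proof -
  let ?N = "card (all_edges n)"
  define q where "q = 1 - p"
  have q: "0 \<le> q" "q \<le> 1 / (10 * real n)" using p by (auto simp: q_def)
  have "1 / (10 * real n) \<le> 1" using n by simp
  then have p0: "0 \<le> p" using p by linarith
  have far: "(real n - 1) / 4 \<le> real (card (all_edges n - E))"
    if "E \<subseteq> all_edges n" "even_decomposable {0..<n} E" for E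
  proof -
    have "real n \<le> 4 * real (card (all_edges n - E)) + 1"
      using even_decomposable_imp_many_non_edges[OF that] by linarith
    then show ?thesis by simp
  qed
  have "gnp_prob n p (even_decomposable {0..<n}) \<le> exp (- ((real n - 1) / 4)) * (p + exp 1 * q) ^ ?N"
    unfolding gnp_prob_def q_def using far
    by (intro binomial_tail_exp_bound[OF finite_all_edges p0 p(2)])
  also have "(p + exp 1 * q) ^ ?N \<le> exp ((exp 1 - 1) * q) ^ ?N"
  proof (rule power_mono)
    have "p + exp 1 * q = 1 + (exp 1 - 1) * q" by (simp add: q_def algebra_simps)
    then show "p + exp 1 * q \<le> exp ((exp 1 - 1) * q)" by simp
  qed (use p0 q in simp)
  also have "\<dots> = exp (real ?N * ((exp 1 - 1) * q))"
    by (simp add: exp_of_nat_mult)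
  also have "\<dots> \<le> exp (real n / 5)"
  proof -
    have "real ?N \<le> real n * real n" using card_all_edges_le[of n] of_nat_mono by fastforce
    moreover have "exp 1 - 1 \<le> (2::real)" using exp_le by simp
    ultimately have "real ?N * ((exp 1 - 1) * q) \<le> (real n * real n) * (2 * (1 / (10 * real n)))"
      using q by (intro mult_mono) auto
    also have "\<dots> = real n / 5" using n by (simp add: field_simps)
    finally show ?thesis by simp
  qed
  also have "exp (- ((real n - 1) / 4)) * exp (real n / 5) = exp (1 / 4 - real n / 20)"
    unfolding exp_add[symmetric] by (simp add: field_simps)
  finally show ?thesis by (simp add: mult_left_mono)
qed

theorem mainTheorem3:
  shows "\<exists>c::real. c > 0 \<and> (\<exists>n0::nat. \<forall>n\<ge>n0. \<forall>p::real.
           1 - 1 / (10 * real n) \<le> p \<and> p \<le> 1 \<longrightarrow>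
           gnp_prob n p (\<lambda>E. even_decomposable {0..<n} E) \<le> exp (- c * real n))"
proof (intro exI[of _ "1 / 40"] conjI exI[of _ 10] allI impI)
  fix n :: nat and p :: real
  assume "10 \<le> n" and p: "1 - 1 / (10 * real n) \<le> p \<and> p \<le> 1"
  then have "gnp_prob n p (even_decomposable {0..<n}) \<le> exp (1 / 4 - real n / 20)"
    by (intro gnp_prob_even_decomposable_le) auto
  also have "\<dots> \<le> exp (- (1 / 40) * real n)"
    using \<open>10 \<le> n\<close> by simp
  finally show "gnp_prob n p (\<lambda>E. even_decomposable {0..<n} E) \<le> exp (- (1 / 40) * real n)" .
qed simp

end
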